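(* There is an absolute constant $C>0$ such that for every finite field $\mathbb{F}_q$ with $q$ elements and every Nikodym set $B\subset\mathbb{F}_q^2$ (i.e. for every $x\in\mathbb{F}_q^2\setminus B$ there exists a line $L\subset\mathbb{F}_q^2$ with $L\cap(\mathbb{F}_q^2\setminus B)=\{x\}$), one has \[|B|\ge \frac{2q^2}{3}-Cq.\] (That is, $|B|\ge \frac{2q^2}{3}+O(q)$ as $q\to\infty$.)
   Context: A line in $\mathbb{F}_q^2$ is a set of the form $\{a+tb: t\in\mathbb{F}_q\}$ with $a,b\in\mathbb{F}_q^2$, $b\neq 0$. *)

theory Defs
  imports "HOL-Algebra.Ring" Complex_Main
begin

definition plane :: "('a, 'm) ring_scheme \<Rightarrow> ('a \<times> 'a) set" where
  "plane R = carrier R \<times> carrier R"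

definition line_through :: "('a, 'm) ring_scheme \<Rightarrow> 'a \<times> 'a \<Rightarrow> 'a \<times> 'a \<Rightarrow> ('a \<times> 'a) set" where
  "line_through R a b =
     {(fst a \<oplus>\<^bsub>R\<^esub> t \<otimes>\<^bsub>R\<^esub> fst b, snd a \<oplus>\<^bsub>R\<^esub> t \<otimes>\<^bsub>R\<^esub> snd b) | t. t \<in> carrier R}"

definition is_line :: "('a, 'm) ring_scheme \<Rightarrow> ('a \<times> 'a) set \<Rightarrow> bool" where
  "is_line R L \<longleftrightarrow> (\<exists>a b. a \<in> plane R \<and> b \<in> plane R \<and> b \<noteq> (\<zero>\<^bsub>R\<^esub>, \<zero>\<^bsub>R\<^esub>)
                          \<and> L = line_through R a b)"

definition nikodym_set :: "('a, 'm) ring_scheme \<Rightarrow> ('a \<times> 'a) set \<Rightarrow> bool" where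
  "nikodym_set R B \<longleftrightarrow> B \<subseteq> plane R \<and>
     (\<forall>x \<in> plane R - B. \<exists>L. is_line R L \<and> L \<inter> (plane R - B) = {x})"

end

theory Submission
  imports Defs "HOL-Analysis.Convex"
begin

text \<open>
  For every point x outside the Nikodym set B choose a line L x meeting the complement N only in x,
  so L x contains q - 1 points of B, and two distinct chosen lines share at most one point.
  If r b counts the chosen lines through b, then the sum of r over B is n (q - 1) with n = card N,
  while the sum of r^2 counts pairs of chosen lines through a common point of B and is at most
  n (n + q - 2).  Cauchy--Schwarz gives n^2 (q - 1)^2 <= card B * n (n + q - 2), and together
  with n + card B = q^2 this forces n <= q^2/3 + 3q.
\<close>

context field begin

lemma line_through_subset_plane:
  assumes "a \<in> plane R" and "d \<in> plane R"
  shows "line_through R a d \<subseteq> plane R"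
  using assms by (auto simp: line_through_def plane_def)

lemma card_line_through:
  assumes "a \<in> plane R" and "d \<in> plane R" and "d \<noteq> (\<zero>, \<zero>)"
  shows "card (line_through R a d) = card (carrier R)"
proof -
  obtain a1 a2 d1 d2 where ad: "a = (a1, a2)" "d = (d1, d2)" by fastforce
  have c: "a1 \<in> carrier R" "a2 \<in> carrier R" "d1 \<in> carrier R" "d2 \<in> carrier R"
    using assms ad by (auto simp: plane_def)
  let ?f = "\<lambda>t. (a1 \<oplus> t \<otimes> d1, a2 \<oplus> t \<otimes> d2)"
  have "inj_on ?f (carrier R)"
  proof (rule inj_onI)
    fix t t' assume t: "t \<in> carrier R" "t' \<in> carrier R" and eq: "?f t = ?f t'"
    have "t \<otimes> d1 = (a1 \<oplus> t \<otimes> d1) \<ominus> a1" using t c by algebra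
    also have "\<dots> = (a1 \<oplus> t' \<otimes> d1) \<ominus> a1" using eq by simp
    also have "\<dots> = t' \<otimes> d1" using t c by algebra
    finally have e1: "t \<otimes> d1 = t' \<otimes> d1" .
    have "t \<otimes> d2 = (a2 \<oplus> t \<otimes> d2) \<ominus> a2" using t c by algebra
    also have "\<dots> = (a2 \<oplus> t' \<otimes> d2) \<ominus> a2" using eq by simp
    also have "\<dots> = t' \<otimes> d2" using t c by algebra
    finally have e2: "t \<otimes> d2 = t' \<otimes> d2" .
    show "t = t'"
    proof (cases "d1 = \<zero>")
      case False
      then show ?thesis using m_rcancel[OF False c(3) t] e1 by simp
    next
      case True
      then have "d2 \<noteq> \<zero>" using assms(3) ad by auto
      then show ?thesis using m_rcancel[OF _ c(4) t] e2 by simp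
    qed
  qed
  moreover have "line_through R a d = ?f ` carrier R"
    unfolding line_through_def ad by auto
  ultimately show ?thesis
    by (simp add: card_image)
qed

lemma line_through_eq_two_points:
  assumes "a \<in> plane R" and "d \<in> plane R"
    and P: "P \<in> line_through R a d" and Q: "Q \<in> line_through R a d" and "P \<noteq> Q"
  shows "line_through R a d = line_through R P (fst Q \<ominus> fst P, snd Q \<ominus> snd P)"
proof -
  obtain a1 a2 d1 d2 where ad: "a = (a1, a2)" "d = (d1, d2)" by fastforce
  have c: "a1 \<in> carrier R" "a2 \<in> carrier R" "d1 \<in> carrier R" "d2 \<in> carrier R"
    using assms ad by (auto simp: plane_def)
  obtain s where s: "s \<in> carrier R" "P = (a1 \<oplus> s \<otimes> d1, a2 \<oplus> s \<otimes> d2)"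
    using P ad by (auto simp: line_through_def)
  obtain u where u: "u \<in> carrier R" "Q = (a1 \<oplus> u \<otimes> d1, a2 \<oplus> u \<otimes> d2)"
    using Q ad by (auto simp: line_through_def)
  define w where "w = u \<ominus> s"
  have "u = w \<oplus> s" using s u unfolding w_def by algebra
  then have "w \<noteq> \<zero>" using s u \<open>P \<noteq> Q\<close> by auto
  then have w: "w \<in> carrier R" "inv w \<in> carrier R" "inv w \<otimes> w = \<one>"
    using s u field_Units unfolding w_def by auto
  have dir: "(fst Q \<ominus> fst P, snd Q \<ominus> snd P) = (w \<otimes> d1, w \<otimes> d2)"
    using s u c unfolding w_def by simp algebra
  show ?thesis
  proof (intro equalityI subsetI)
    fix X assume "X \<in> line_through R a d"
    then obtain t where t: "t \<in> carrier R" "X = (a1 \<oplus> t \<otimes> d1, a2 \<oplus> t \<otimes> d2)"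
      using ad by (auto simp: line_through_def)
    define t' where "t' = (t \<ominus> s) \<otimes> inv w"
    have "t' \<otimes> w = t \<ominus> s"
      using t s w unfolding t'_def by (simp add: m_assoc)
    then have "t' \<otimes> (w \<otimes> d) = (t \<ominus> s) \<otimes> d" if "d \<in> carrier R" for d
      using that t s w unfolding t'_def by (simp flip: m_assoc)
    then have "X = (fst P \<oplus> t' \<otimes> (w \<otimes> d1), snd P \<oplus> t' \<otimes> (w \<otimes> d2))"
      using t s c by simp algebra
    moreover have "t' \<in> carrier R" using t s w unfolding t'_def by simp
    ultimately show "X \<in> line_through R P (fst Q \<ominus> fst P, snd Q \<ominus> snd P)"
      unfolding dir line_through_def by auto
  next
    fix X assume "X \<in> line_through R P (fst Q \<ominus> fst P, snd Q \<ominus> snd P)"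
    then obtain t where t: "t \<in> carrier R" "X = (fst P \<oplus> t \<otimes> (w \<otimes> d1), snd P \<oplus> t \<otimes> (w \<otimes> d2))"
      unfolding dir line_through_def by auto
    then have "X = (a1 \<oplus> (s \<oplus> t \<otimes> w) \<otimes> d1, a2 \<oplus> (s \<oplus> t \<otimes> w) \<otimes> d2)"
      using s c w by simp algebra
    moreover have "s \<oplus> t \<otimes> w \<in> carrier R" using s t w by simp
    ultimately show "X \<in> line_through R a d"
      unfolding ad line_through_def by auto
  qed
qed

lemma is_line_subset_plane: "is_line R L \<Longrightarrow> L \<subseteq> plane R"
  unfolding is_line_def using line_through_subset_plane by blast

lemma card_is_line: "is_line R L \<Longrightarrow> card L = card (carrier R)"
  unfolding is_line_def using card_line_through by blast

lemma card_Int_lines_le_1: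
  assumes "is_line R L1" and "is_line R L2" and "L1 \<noteq> L2"
  shows "card (L1 \<inter> L2) \<le> 1"
proof -
  have "P = Q" if "P \<in> L1 \<inter> L2" and "Q \<in> L1 \<inter> L2" for P Q
  proof (rule ccontr)
    assume "P \<noteq> Q"
    obtain a d where "a \<in> plane R" "d \<in> plane R" "L1 = line_through R a d"
      using assms(1) unfolding is_line_def by blast
    then have "L1 = line_through R P (fst Q \<ominus> fst P, snd Q \<ominus> snd P)"
      using line_through_eq_two_points \<open>P \<noteq> Q\<close> that by blast
    moreover obtain a' d' where "a' \<in> plane R" "d' \<in> plane R" "L2 = line_through R a' d'"
      using assms(2) unfolding is_line_def by blast
    then have "L2 = line_through R P (fst Q \<ominus> fst P, snd Q \<ominus> snd P)"
      using line_through_eq_two_points \<open>P \<noteq> Q\<close> that by blast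
    ultimately show False using assms(3) by simp
  qed
  then show ?thesis
    by (cases "finite (L1 \<inter> L2)") (auto simp: card_le_Suc0_iff_eq)
qed

end

lemma sum_incidences:
  fixes L :: "'a \<Rightarrow> 'b set"
  assumes "finite N" and "finite B"
  shows "(\<Sum>b\<in>B. \<Sum>x\<in>N. of_bool (b \<in> L x) :: real) = (\<Sum>x\<in>N. real (card (L x \<inter> B)))"
  using assms by (subst sum.swap) (simp add: Int_commute)

lemma sum_squared_incidences:
  fixes L :: "'a \<Rightarrow> 'b set"
  assumes "finite N" and "finite B"
  shows "(\<Sum>b\<in>B. (\<Sum>x\<in>N. of_bool (b \<in> L x) :: real)^2)
       = (\<Sum>x\<in>N. \<Sum>y\<in>N. real (card (L x \<inter> L y \<inter> B)))"
proof -
  have "(\<Sum>b\<in>B. (\<Sum>x\<in>N. of_bool (b \<in> L x) :: real)^2)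
      = (\<Sum>b\<in>B. \<Sum>x\<in>N. \<Sum>y\<in>N. of_bool (b \<in> L x \<inter> L y))"
    by (simp add: power2_eq_square sum_product flip: of_bool_conj)
  also have "\<dots> = (\<Sum>x\<in>N. \<Sum>y\<in>N. \<Sum>b\<in>B. of_bool (b \<in> L x \<inter> L y))"
    by (simp add: sum.swap[of _ B] sum.swap[of _ B N])
  finally show ?thesis
    using assms by (simp add: Collect_conj_eq Int_ac)
qed

lemma incidence_count_bound:
  fixes L :: "'a \<Rightarrow> 'b set"
  assumes "finite N" and "finite B"
    and on_line: "\<And>x. x \<in> N \<Longrightarrow> card (L x \<inter> B) = k"
    and meet: "\<And>x y. x \<in> N \<Longrightarrow> y \<in> N \<Longrightarrow> x \<noteq> y \<Longrightarrow> card (L x \<inter> L y \<inter> B) \<le> 1"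
  shows "(real (card N) * real k)^2 \<le> real (card B) * (real (card N) * (real (card N) + real k - 1))"
proof -
  define r where "r b = (\<Sum>x\<in>N. of_bool (b \<in> L x) :: real)" for b
  have sum_r: "(\<Sum>b\<in>B. r b) = real (card N) * real k"
    unfolding r_def using sum_incidences[OF assms(1,2)] on_line by simp
  have sum_r_squared: "(\<Sum>b\<in>B. r b ^ 2) \<le> real (card N) * (real (card N) + real k - 1)"
  proof -
    have "(\<Sum>y\<in>N. real (card (L x \<inter> L y \<inter> B))) \<le> real k + (real (card N) - 1)" if "x \<in> N" for x
    proof -
      have "(\<Sum>y\<in>N. real (card (L x \<inter> L y \<inter> B)))
          = real (card (L x \<inter> B)) + (\<Sum>y\<in>N - {x}. real (card (L x \<inter> L y \<inter> B)))"
        using assms(1) that by (simp add: sum.remove)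
      also have "\<dots> \<le> real k + (\<Sum>y\<in>N - {x}. 1)"
        using on_line meet that by (intro add_mono sum_mono) auto
      also have "(\<Sum>y\<in>N - {x}. 1) = real (card N) - 1"
      proof -
        have "0 < card N"
          using assms(1) that card_gt_0_iff by blast
        then show ?thesis
          using assms(1) that by (simp add: of_nat_diff)
      qed
      finally show ?thesis .
    qed
    then have "(\<Sum>x\<in>N. \<Sum>y\<in>N. real (card (L x \<inter> L y \<inter> B))) \<le> (\<Sum>x\<in>N. real k + (real (card N) - 1))"
      by (rule sum_mono)
    then show ?thesis
      unfolding r_def sum_squared_incidences[OF assms(1,2)] by (simp add: algebra_simps)
  qed
  have "(real (card N) * real k)^2 \<le> (\<Sum>b\<in>B. r b ^ 2) * real (card B)"
    unfolding sum_r[symmetric] by (rule sum_squared_le_sum_of_squares)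
  also have "\<dots> \<le> real (card N) * (real (card N) + real k - 1) * real (card B)"
    using sum_r_squared by (rule mult_right_mono) simp
  finally show ?thesis
    by (simp add: mult.commute)
qed

lemma nikodym_arith_bound:
  fixes n b q :: real
  assumes q: "q \<ge> 2" and nb: "n + b = q^2"
    and h: "(n * (q - 1))^2 \<le> b * (n * (n + (q - 1) - 1))"
  shows "b \<ge> 2 * q^2 / 3 - 3 * q"
proof (rule ccontr)
  assume "\<not> ?thesis"
  then have big: "n > q^2 / 3 + 3 * q"
    using nb by simp
  then have "n > 0"
    using q zero_le_power2[of q] by linarith
  moreover have "n * (n * (q - 1)^2) \<le> n * (b * (n + q - 2))"
    using h by (simp add: power2_eq_square algebra_simps)
  ultimately have "n * (q - 1)^2 \<le> b * (n + q - 2)"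
    by simp
  moreover have "b * (n + q - 2) - n * (q - 1)^2 = q^3 - 2 * q^2 - n * (n - q - 1)"
    using nb by (simp add: power2_eq_square power3_eq_cube algebra_simps flip: eq_diff_eq)
  ultimately have "n * (n - q - 1) \<le> q^3"
    using q by (smt (verit) zero_le_power2)
  moreover have "(q^2 / 3 + 3 * q) * (q^2 / 3 + 2 * q - 1) < n * (n - q - 1)"
  proof (rule mult_strict_mono)
    show "q^2 / 3 + 2 * q - 1 < n - q - 1" using big by linarith
    show "0 < n" and "0 \<le> q^2 / 3 + 2 * q - 1"
      using big q zero_le_power2[of q] by linarith+
  qed (use big in simp)
  moreover have "q^3 \<le> (q^2 / 3 + 3 * q) * (q^2 / 3 + 2 * q - 1)"
  proof -
    have "(q^2 / 3 + 3 * q) * (q^2 / 3 + 2 * q - 1) - q^3 = q^4 / 9 + 2 * q^3 / 3 + q * (17 * q - 9) / 3"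
      by (simp add: power2_eq_square power3_eq_cube power4_eq_xxxx field_simps)
    moreover have "q * (17 * q - 9) \<ge> 0" using q by simp
    ultimately show ?thesis using q by (smt (verit) zero_le_power divide_nonneg_pos)
  qed
  ultimately show False by linarith
qed

lemma (in field) card_nikodym_set_ge:
  assumes fin: "finite (carrier R)" and nik: "nikodym_set R B"
  shows "2 * real (card (carrier R))^2 / 3 - 3 * real (card (carrier R)) \<le> real (card B)"
proof -
  define q where "q = card (carrier R)"
  define N where "N = plane R - B"
  have BP: "B \<subseteq> plane R"
    using nik by (simp add: nikodym_set_def)
  have fP: "finite (plane R)"
    using fin by (simp add: plane_def)
  have fB: "finite B" and fN: "finite N"
    using BP fP finite_subset unfolding N_def by auto
  have "card N + card B = q^2"
    using card_Diff_subset[OF fB BP] card_mono[OF fP BP] unfolding N_def q_def plane_def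
    by (simp add: card_cartesian_product power2_eq_square)
  have "card {\<zero>, \<one>} \<le> q"
    unfolding q_def using fin by (intro card_mono) auto
  then have "q \<ge> 2" by simp
  have "\<forall>x\<in>N. \<exists>L. is_line R L \<and> L \<inter> N = {x}"
    using nik unfolding nikodym_set_def N_def by blast
  then obtain L where L: "\<And>x. x \<in> N \<Longrightarrow> is_line R (L x) \<and> L x \<inter> N = {x}"
    by (metis bchoice)
  have line: "is_line R (L x)" "L x \<inter> N = {x}" "L x \<subseteq> plane R" "finite (L x)" if "x \<in> N" for x
    using L[OF that] is_line_subset_plane[of "L x"] fP finite_subset by blast+
  have "card (L x \<inter> B) = q - 1" if "x \<in> N" for x
  proof -
    have "L x \<inter> B = L x - {x}" and "x \<in> L x"
      using line[OF that] BP unfolding N_def by blast+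
    then show ?thesis
      using line(1)[OF that] card_is_line[of "L x"] unfolding q_def by simp
  qed
  moreover have "card (L x \<inter> L y \<inter> B) \<le> 1" if "x \<in> N" "y \<in> N" "x \<noteq> y" for x y
  proof -
    have "L x \<noteq> L y"
      using line(2)[OF that(1)] line(2)[OF that(2)] that(3) by auto
    then have "card (L x \<inter> L y) \<le> 1"
      using card_Int_lines_le_1 line(1) that(1,2) by blast
    moreover have "card (L x \<inter> L y \<inter> B) \<le> card (L x \<inter> L y)"
      using line(4)[OF that(1)] by (intro card_mono) auto
    ultimately show ?thesis
      by linarith
  qed
  ultimately have "(real (card N) * real (q - 1))^2
      \<le> real (card B) * (real (card N) * (real (card N) + real (q - 1) - 1))"
    by (rule incidence_count_bound[OF fN fB])
  moreover have "real (q - 1) = real q - 1"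
    using \<open>q \<ge> 2\<close> by simp
  moreover have "real (card N) + real (card B) = real q ^ 2"
    using \<open>card N + card B = q^2\<close> by (metis of_nat_add of_nat_power)
  ultimately show ?thesis
    using nikodym_arith_bound[of "real q" "real (card N)" "real (card B)"] \<open>q \<ge> 2\<close>
    unfolding q_def by simp
qed

theorem mainTheorem2:
  shows "\<exists>C::real. C > 0 \<and>
    (\<forall>(R :: nat ring) B. field R \<longrightarrow> finite (carrier R) \<longrightarrow> nikodym_set R B \<longrightarrow>
       real (card B) \<ge> 2 * real (card (carrier R)) ^ 2 / 3 - C * real (card (carrier R)))"
proof (intro exI[of _ 3] conjI allI impI)
  fix R :: "nat ring" and B
  assume "field R" and "finite (carrier R)" and "nikodym_set R B"
  then show "2 * real (card (carrier R))^2 / 3 - 3 * real (card (carrier R)) \<le> real (card B)"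
    by (rule field.card_nikodym_set_ge)
qed simp

end
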